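(* Let $c=1$, $\lambda_1,\lambda_2,\mu_1,\mu_2>0$, $\lambda=\lambda_1+\lambda_2$, let $X$ be the Markov chain described in the context and fix $\alpha$ with $\mathrm{Re}\,\alpha>0$. Then the scalar $G(\alpha)$ satisfies $$(\lambda+\mu_1+\alpha)G(\alpha)=\mu_1+\lambda_1G(\alpha)^2+\lambda_2G(\alpha)\,\phi_{\lambda_2,\mu_2}\bigl(\lambda_1(1-G(\alpha))+\alpha\bigr).$$
   Context: With $c=1$, the Markov chain $X$ on $\mathbb{N}_0^2$ has only nonzero off-diagonal rates $q((i,j),(i+1,j))=\lambda_1$, $q((i,j),(i,j+1))=\lambda_2$ ($i,j\ge0$), $q((i,0),(i-1,0))=\mu_1$ ($i\ge1$), $q((i,j),(i,j-1))=\mu_2$ ($j\ge1$) (single-server queue with two classes, class 2 preemptive priority). For $A\subset\mathbb{N}_0^2$, $\tau_A=\inf\{t>0:X(t^-)\ne X(t)\in A\}$; $E_z$ is expectation given $X(0)=z$. $G(\alpha)=E_{(i+1,0)}[e^{-\alpha\tau_{\{(i,0)\}}}]$, which does not depend on $i\ge0$. For $\lambda',\mu'>0$, $\phi_{\lambda',\mu'}(s)=\frac{\lambda'+\mu'+s-\sqrt{(\lambda'+\mu'+s)^2-4\lambda'\mu'}}{2\lambda'}$ is the Laplace–Stieltjes transform of the busy period of an $M/M/1$ queue (arrival rate $\lambda'$, service rate $\mu'$) started by one customer. *)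

theory Defs
  imports "HOL-Probability.Probability"
begin

text \<open>Single-server two-class preemptive-priority queue (c = 1) as a continuous-time
Markov chain on nat x nat, constructed explicitly from an i.i.d. sequence of pairs
(E_k, U_k), E_k ~ Exp(1), U_k ~ Uniform[0,1]: the embedded jump chain moves from z
to w with probability q(z,w)/q(z) (chosen by U_k), and the k-th holding time is
E_k / q(Y_k).\<close>

type_synonym state = "nat \<times> nat"

definition rate :: "real \<Rightarrow> real \<Rightarrow> real \<Rightarrow> real \<Rightarrow> state \<Rightarrow> state \<Rightarrow> real" where
  "rate l1 l2 m1 m2 z w =
     (let (i, j) = z in
       if w = (i + 1, j) then l1
       else if w = (i, j + 1) then l2
       else if j = 0 \<and> i \<ge> 1 \<and> w = (i - 1, 0) then m1
       else if j \<ge> 1 \<and> w = (i, j - 1) then m2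
       else 0)"

definition qout :: "real \<Rightarrow> real \<Rightarrow> real \<Rightarrow> real \<Rightarrow> state \<Rightarrow> real" where
  "qout l1 l2 m1 m2 z =
     (let (i, j) = z in
       l1 + l2 + (if j = 0 \<and> i \<ge> 1 then m1 else 0) + (if j \<ge> 1 then m2 else 0))"

definition jump :: "real \<Rightarrow> real \<Rightarrow> real \<Rightarrow> real \<Rightarrow> state \<Rightarrow> real \<Rightarrow> state" where
  "jump l1 l2 m1 m2 z u =
     (let (i, j) = z; Q = qout l1 l2 m1 m2 z in
       if u * Q < rate l1 l2 m1 m2 z (i + 1, j) then (i + 1, j)
       else if u * Q < rate l1 l2 m1 m2 z (i + 1, j) + rate l1 l2 m1 m2 z (i, j + 1) then (i, j + 1)
       else if j = 0 then (i - 1, 0)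
       else (i, j - 1))"

definition ctmc_space :: "(nat \<Rightarrow> real \<times> real) measure" where
  "ctmc_space = PiM UNIV (\<lambda>_. density lborel (exponential_density 1) \<Otimes>\<^sub>M uniform_measure lborel {0..1})"

primrec jchain :: "real \<Rightarrow> real \<Rightarrow> real \<Rightarrow> real \<Rightarrow> state \<Rightarrow> (nat \<Rightarrow> real \<times> real) \<Rightarrow> nat \<Rightarrow> state" where
  "jchain l1 l2 m1 m2 z0 \<omega> 0 = z0"
| "jchain l1 l2 m1 m2 z0 \<omega> (Suc k) = jump l1 l2 m1 m2 (jchain l1 l2 m1 m2 z0 \<omega> k) (snd (\<omega> k))"

definition jtime :: "real \<Rightarrow> real \<Rightarrow> real \<Rightarrow> real \<Rightarrow> state \<Rightarrow> (nat \<Rightarrow> real \<times> real) \<Rightarrow> nat \<Rightarrow> real" where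
  "jtime l1 l2 m1 m2 z0 \<omega> n =
     (\<Sum>k<n. fst (\<omega> k) / qout l1 l2 m1 m2 (jchain l1 l2 m1 m2 z0 \<omega> k))"

definition jump_into :: "real \<Rightarrow> real \<Rightarrow> real \<Rightarrow> real \<Rightarrow> state \<Rightarrow> state set \<Rightarrow> (nat \<Rightarrow> real \<times> real) \<Rightarrow> nat \<Rightarrow> bool" where
  "jump_into l1 l2 m1 m2 z0 A \<omega> n \<longleftrightarrow>
     n \<ge> 1 \<and> jchain l1 l2 m1 m2 z0 \<omega> n \<in> A \<and>
     jchain l1 l2 m1 m2 z0 \<omega> (n - 1) \<noteq> jchain l1 l2 m1 m2 z0 \<omega> n"

text \<open>E_z[exp(-alpha tau_A)], with exp(-alpha tau_A) = 0 on {tau_A = infinity}.\<close>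
definition hit_lst :: "real \<Rightarrow> real \<Rightarrow> real \<Rightarrow> real \<Rightarrow> state \<Rightarrow> state set \<Rightarrow> complex \<Rightarrow> complex" where
  "hit_lst l1 l2 m1 m2 z A \<alpha> =
     (\<integral>\<omega>. (if \<exists>n. jump_into l1 l2 m1 m2 z A \<omega> n
            then exp (- \<alpha> * complex_of_real
                     (jtime l1 l2 m1 m2 z \<omega> (LEAST n. jump_into l1 l2 m1 m2 z A \<omega> n)))
            else 0) \<partial>ctmc_space)"

definition Gfun :: "real \<Rightarrow> real \<Rightarrow> real \<Rightarrow> real \<Rightarrow> nat \<Rightarrow> complex \<Rightarrow> complex" where
  "Gfun l1 l2 m1 m2 i \<alpha> = hit_lst l1 l2 m1 m2 (i + 1, 0) {(i, 0)} \<alpha>"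

text \<open>Busy-period LST of M/M/1 (principal complex square root).\<close>
definition phi :: "real \<Rightarrow> real \<Rightarrow> complex \<Rightarrow> complex" where
  "phi l m s = (of_real l + of_real m + s
                - csqrt ((of_real l + of_real m + s)\<^sup>2 - 4 * of_real l * of_real m)) / (2 * of_real l)"

end

theory Submission
  imports Defs
begin

text \<open>Let U k j be the transform of the time to reach (i, 0) from (i + k, j), so G = U 1 0.
  First-step analysis makes U a bounded solution of a linear system in (k, j) which, for
  Re \<alpha> > 0, is a contraction; hence U (k + 1) j = G * U k j, both sides solving the same
  system. Substituted on level k = 1, this turns the system into a second-order recurrence in j
  whose characteristic roots are the busy-period transform phi (of modulus < 1) and its
  conjugate root (of modulus > 1). Boundedness selects phi, so U 1 1 = G * phi (\<dots>), and the
  first-step equation at (i + 1, 0) is the claimed identity.\<close>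

lemma bounded_geometric_eq_0:
  fixes f :: "nat \<Rightarrow> 'a :: real_normed_field"
  assumes step: "\<And>j. f (Suc j) = r * f j" and bnd: "\<And>j. norm (f j) \<le> B" and r: "1 < norm r"
  shows "f 0 = 0"
proof (rule ccontr)
  assume f0: "f 0 \<noteq> 0"
  have f: "f j = r ^ j * f 0" for j by (induction j) (simp_all add: step)
  obtain j where "B / norm (f 0) < norm r ^ j" using real_arch_pow[OF r] by blast
  then have "B < norm (f j)" using f0 by (simp add: f[of j] norm_mult norm_power pos_divide_less_eq)
  with bnd[of j] show False by simp
qed

text \<open>The sequence \<psi> (j + 1) - r1 * \<psi> j is geometric with ratio r2.\<close>
lemma bounded_recurrence_ratio:
  fixes \<psi> :: "nat \<Rightarrow> 'a :: real_normed_field"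
  assumes rec: "\<And>j. \<psi> (j + 2) = (r1 + r2) * \<psi> (j + 1) - r1 * r2 * \<psi> j"
    and bnd: "\<And>j. norm (\<psi> j) \<le> B" and r1: "norm r1 \<le> 1" and r2: "1 < norm r2"
  shows "\<psi> 1 = r1 * \<psi> 0"
proof -
  define f where "f j = \<psi> (j + 1) - r1 * \<psi> j" for j
  have "f (Suc j) = r2 * f j" for j
    using rec[of j] by (simp add: f_def algebra_simps numeral_2_eq_2)
  moreover have "norm (f j) \<le> 2 * B" for j
  proof -
    have "norm (r1 * \<psi> j) \<le> B"
      using bnd[of j] r1 by (simp add: norm_mult) (meson mult_left_le_one_le norm_ge_zero order_trans)
    then show ?thesis
      using bnd[of "j + 1"] norm_triangle_ineq4[of "\<psi> (j + 1)" "r1 * \<psi> j"] by (simp add: f_def)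
  qed
  ultimately have "f 0 = 0" using bounded_geometric_eq_0 r2 by blast
  then show ?thesis by (simp add: f_def)
qed

lemma norm_le_discounted_average:
  fixes x a b c \<alpha> :: complex and p q r M :: real
  assumes nonneg: "0 \<le> p" "0 \<le> q" "0 \<le> r" "0 \<le> Re \<alpha>" and pos: "0 < p + q + r"
    and eq: "(of_real (p + q + r) + \<alpha>) * x = of_real p * a + of_real q * b + of_real r * c"
    and bnd: "norm a \<le> M" "norm b \<le> M" "norm c \<le> M"
  shows "norm x \<le> (p + q + r) / (p + q + r + Re \<alpha>) * M"
proof -
  have "(p + q + r + Re \<alpha>) * norm x \<le> norm (of_real (p + q + r) + \<alpha>) * norm x"
    using complex_Re_le_cmod[of "of_real (p + q + r) + \<alpha>"] by (intro mult_right_mono) auto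
  also have "\<dots> = norm (of_real p * a + of_real q * b + of_real r * c)"
    by (simp only: eq[symmetric] norm_mult)
  also have "\<dots> \<le> p * M + q * M + r * M"
  proof -
    have "norm (of_real p * a) \<le> p * M" "norm (of_real q * b) \<le> q * M" "norm (of_real r * c) \<le> r * M"
      using nonneg bnd by (simp_all add: norm_mult mult_left_mono)
    then show ?thesis
      by (meson add_mono norm_triangle_le order.trans)
  qed
  also have "\<dots> = (p + q + r) * M" by (simp add: distrib_right)
  finally have "norm x * (p + q + r + Re \<alpha>) \<le> (p + q + r) * M" by (simp add: mult.commute)
  moreover have "0 < p + q + r + Re \<alpha>" using nonneg pos by simp
  ultimately show ?thesis by (simp add: mult_imp_le_div_pos)
qed

lemma bounded_discounted_harmonic_eq_0:
  fixes d :: "nat \<Rightarrow> nat \<Rightarrow> complex" and l1 l2 m1 m2 B :: real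
  assumes pos: "0 < l1" "0 < l2" "0 < m1" "0 < m2" "0 < Re \<alpha>"
    and bnd: "\<And>k j. norm (d k j) \<le> B" and d00: "d 0 0 = 0"
    and eq: "\<And>k j. 1 \<le> k \<Longrightarrow> (of_real (l1 + l2 + (if j = 0 then m1 else m2)) + \<alpha>) * d k j =
        of_real l1 * d (k + 1) j + of_real l2 * d k (j + 1) +
        of_real (if j = 0 then m1 else m2) * (if j = 0 then d (k - 1) 0 else d k (j - 1))"
    and k: "1 \<le> k"
  shows "d k j = 0"
proof -
  define Q where "Q = l1 + l2 + m1 + m2"
  define c where "c = Q / (Q + Re \<alpha>)"
  have c: "0 \<le> c" "c < 1" using pos by (auto simp: c_def Q_def)
  have B: "0 \<le> B" using bnd[of 0 0] norm_ge_zero order_trans by blast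
  have contract: "\<forall>k\<ge>1. \<forall>j. norm (d k j) \<le> c ^ n * B" for n
  proof (induction n)
    case 0 then show ?case using bnd by simp
  next
    case (Suc n)
    have nb: "norm (d k j) \<le> c ^ n * B" if "1 \<le> k \<or> (k = 0 \<and> j = 0)" for k j
      using Suc that d00 B c by auto
    show ?case
    proof (intro allI impI)
      fix k j :: nat assume k: "1 \<le> k"
      define m where "m = (if j = 0 then m1 else m2)"
      have m: "0 < m" "m \<le> m1 + m2" using pos by (auto simp: m_def)
      have down: "norm (d (k - 1) 0) \<le> c ^ n * B" using nb[of "k - 1" 0] k by (cases "k = 1") auto
      have "norm (d k j) \<le> (l1 + l2 + m) / (l1 + l2 + m + Re \<alpha>) * (c ^ n * B)"
        by (rule norm_le_discounted_average[OF _ _ _ _ _ eq[OF k, of j, folded m_def]])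
           (use nb[of "k + 1" j] nb[of k "j + 1"] nb[of k "j - 1"] down k pos m in auto)
      also have "\<dots> \<le> c * (c ^ n * B)"
      proof (rule mult_right_mono)
        have "(l1 + l2 + m) * Re \<alpha> \<le> Q * Re \<alpha>"
          using m pos by (intro mult_right_mono) (auto simp: Q_def)
        then show "(l1 + l2 + m) / (l1 + l2 + m + Re \<alpha>) \<le> c"
          using pos m by (simp add: c_def Q_def divide_simps algebra_simps)
      qed (use B c in simp)
      finally show "norm (d k j) \<le> c ^ Suc n * B" by simp
    qed
  qed
  have "(\<lambda>n. c ^ n * B) \<longlonglongrightarrow> 0"
    by (intro tendsto_mult_left_zero LIMSEQ_power_zero) (use c in auto)
  then have "norm (d k j) \<le> 0"
    using contract k by (intro LIMSEQ_le_const) auto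
  then show ?thesis by simp
qed

lemma norm_diff_lt_norm_add_csqrt:
  fixes w :: complex and c :: real
  assumes w: "0 < Re w" and c: "c < (Re w)\<^sup>2"
  shows "norm (w - csqrt (w\<^sup>2 - of_real c)) < norm (w + csqrt (w\<^sup>2 - of_real c))"
proof -
  define r where "r = csqrt (w\<^sup>2 - of_real c)"
  have r2: "r\<^sup>2 = w\<^sup>2 - of_real c" by (simp add: r_def)
  have Re_sq: "(Re r)\<^sup>2 - (Im r)\<^sup>2 = (Re w)\<^sup>2 - (Im w)\<^sup>2 - c"
    using arg_cong[OF r2, of Re] by (simp add: power2_eq_square)
  have Im_sq: "Re r * Im r = Re w * Im w"
    using arg_cong[OF r2, of Im] by (simp add: power2_eq_square mult.commute)
  have Re_r: "0 < Re r"
  proof (rule ccontr)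
    assume "\<not> 0 < Re r"
    then have "Re r = 0" using Re_csqrt[of "w\<^sup>2 - of_real c"] by (simp add: r_def)
    then have "Im w = 0" using Im_sq w by simp
    then have "- (Im r)\<^sup>2 = (Re w)\<^sup>2 - c" using Re_sq \<open>Re r = 0\<close> by simp
    then show False using c by (smt (verit) zero_le_power2)
  qed
  have "Re r * (Re w * Re r + Im w * Im r) = Re w * ((Re r)\<^sup>2 + (Im w)\<^sup>2)"
    using Im_sq by (simp add: algebra_simps power2_eq_square)
  moreover have "0 < Re w * ((Re r)\<^sup>2 + (Im w)\<^sup>2)"
    using w Re_r by (intro mult_pos_pos add_pos_nonneg) auto
  ultimately have "0 < Re w * Re r + Im w * Im r"
    using Re_r by (metis zero_less_mult_pos)
  then have "(norm (w - r))\<^sup>2 < (norm (w + r))\<^sup>2"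
    unfolding cmod_power2 by (simp add: power2_eq_square algebra_simps)
  then show ?thesis
    unfolding r_def[symmetric] by (rule power_less_imp_less_base) simp
qed

lemma busy_period_roots:
  fixes l m :: real and s :: complex
  assumes l: "0 < l" and m: "0 < m" and s: "0 < Re s"
  defines "w \<equiv> of_real l + of_real m + s"
  defines "r \<equiv> (w + csqrt (w\<^sup>2 - 4 * of_real l * of_real m)) / (2 * of_real l)"
  shows "phi l m s + r = w / of_real l" "phi l m s * r = of_real m / of_real l"
    and "norm (phi l m s) < 1" "1 < norm r"
proof -
  define \<delta> where "\<delta> = csqrt (w\<^sup>2 - 4 * of_real l * of_real m)"
  have phi: "phi l m s = (w - \<delta>) / (2 * of_real l)" by (simp add: phi_def w_def \<delta>_def)
  have r: "r = (w + \<delta>) / (2 * of_real l)" by (simp add: r_def \<delta>_def)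
  have l': "(of_real l :: complex) \<noteq> 0" using l by simp
  show sum: "phi l m s + r = w / of_real l"
    using l' by (simp add: phi r field_simps)
  have "phi l m s * r = (w\<^sup>2 - \<delta>\<^sup>2) / (4 * (of_real l)\<^sup>2)"
    by (simp add: phi r field_simps power2_eq_square)
  also have "w\<^sup>2 - \<delta>\<^sup>2 = 4 * of_real l * of_real m" by (simp add: \<delta>_def)
  finally show prod: "phi l m s * r = of_real m / of_real l"
    using l' by (simp add: power2_eq_square)
  have "(l + m)\<^sup>2 < (Re w)\<^sup>2"
    using l m s by (intro power_strict_mono) (auto simp: w_def)
  moreover have "4 * l * m \<le> (l + m)\<^sup>2"
    using zero_le_power2[of "l - m"] by (simp add: power2_eq_square algebra_simps)
  ultimately have "norm (w - \<delta>) < norm (w + \<delta>)"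
    using norm_diff_lt_norm_add_csqrt[of w "4 * l * m"] l m s
    by (simp add: \<delta>_def w_def)
  then have less: "norm (phi l m s) < norm r"
    using l by (simp add: phi r norm_divide divide_strict_right_mono)
  have "l + m < norm w"
    using complex_Re_le_cmod[of w] s by (simp add: w_def)
  then have "(l + m) / l < norm w / l"
    using l by (simp add: divide_strict_right_mono)
  then have "1 + m / l < norm w / l"
    using l by (simp add: add_divide_distrib)
  also have "norm w / l \<le> norm (phi l m s) + norm r"
    using norm_triangle_ineq[of "phi l m s" r] l by (simp add: sum norm_divide)
  finally have "(1 - norm (phi l m s)) * (1 - norm r) < 0"
    using arg_cong[OF prod, of norm] l m by (simp add: norm_mult norm_divide algebra_simps)
  then show "norm (phi l m s) < 1" "1 < norm r"
    using less by (auto simp: mult_less_0_iff)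
qed

lemma interval_integral_cexp_neg:
  fixes \<beta> :: complex
  assumes b: "0 < Re \<beta>"
  shows "(CLBINT x=0..\<infinity>. exp (- \<beta> * complex_of_real x)) = 1 / \<beta>"
proof -
  have bnz: "\<beta> \<noteq> 0" using b by auto
  let ?F = "\<lambda>x::real. - exp (- \<beta> * complex_of_real x) / \<beta>"
  have "(CLBINT x=0..\<infinity>. exp (- \<beta> * complex_of_real x)) = 0 - (- 1 / \<beta>)"
  proof (rule interval_integral_FTC_integrable)
    show "(0::ereal) < \<infinity>" by simp
    fix x :: real
    have d: "(complex_of_real has_vector_derivative 1) (at x)"
      using has_vector_derivative_of_real[OF DERIV_ident[where F="at x"]] by simp
    have "((\<lambda>z. - exp (- \<beta> * z) / \<beta>) has_field_derivative exp (- \<beta> * complex_of_real x))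
        (at (complex_of_real x))"
      using bnz by (auto intro!: derivative_eq_intros simp: field_simps)
    from field_vector_diff_chain_at[OF d this]
    show "(?F has_vector_derivative exp (- \<beta> * complex_of_real x)) (at x)"
      by (simp add: o_def)
    show "isCont (\<lambda>x. exp (- \<beta> * complex_of_real x)) x" by (intro continuous_intros)
  next
    have "einterval 0 \<infinity> = {0::real<..}" by (auto simp: einterval_def zero_ereal_def)
    moreover have "set_integrable lborel {0<..} (\<lambda>x. exp (- \<beta> * complex_of_real x))"
    proof (rule set_integrable_bound[OF integrable_I0i_exp_mscale[OF b]])
      show "set_borel_measurable lborel {0<..} (\<lambda>x. exp (- \<beta> * complex_of_real x))"
        unfolding set_borel_measurable_def by measurable
      show "AE x in lborel. x \<in> {0<..} \<longrightarrow>
          norm (exp (- \<beta> * complex_of_real x)) \<le> norm (exp (- (x * Re \<beta>)))"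
        by (auto simp: mult.commute)
    qed
    ultimately show "set_integrable lborel (einterval 0 \<infinity>) (\<lambda>x. exp (- \<beta> * complex_of_real x))"
      by simp
  next
    show "((?F \<circ> real_of_ereal) \<longlongrightarrow> - 1 / \<beta>) (at_right 0)"
      unfolding zero_ereal_def ereal_tendsto_simps
      using bnz by (auto intro!: tendsto_eq_intros)
    have lim: "((\<lambda>t::real. exp (- (t * Re \<beta>))) \<longlongrightarrow> 0) at_top"
      using b by real_asymp
    have "((\<lambda>t::real. exp (- \<beta> * complex_of_real t)) \<longlongrightarrow> 0) at_top"
      by (rule tendsto_norm_zero_cancel) (use lim in \<open>simp add: mult.commute\<close>)
    from tendsto_divide[OF tendsto_minus[OF this] tendsto_const[of \<beta>]]
    show "((?F \<circ> real_of_ereal) \<longlongrightarrow> 0) (at_left \<infinity>)"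
      unfolding ereal_tendsto_simps using bnz by simp
  qed
  then show ?thesis by simp
qed

abbreviation Exp1 :: "real measure" where
  "Exp1 \<equiv> density lborel (exponential_density 1)"

abbreviation Unif01 :: "real measure" where
  "Unif01 \<equiv> uniform_measure lborel {0..1}"

abbreviation step_space :: "(real \<times> real) measure" where
  "step_space \<equiv> Exp1 \<Otimes>\<^sub>M Unif01"

lemma exponential_laplace_transform:
  fixes \<alpha> :: complex and q :: real
  assumes q: "0 < q" and a: "0 \<le> Re \<alpha>"
  shows "(\<integral>x. exp (- \<alpha> * complex_of_real (x / q)) \<partial>Exp1) = of_real q / (of_real q + \<alpha>)"
proof -
  define \<beta> where "\<beta> = 1 + \<alpha> / of_real q"
  have b: "0 < Re \<beta>" using q a unfolding \<beta>_def by (simp add: add_pos_nonneg divide_nonneg_pos)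
  have "(\<integral>x. exp (- \<alpha> * complex_of_real (x / q)) \<partial>Exp1) =
      (\<integral>x. exponential_density 1 x *\<^sub>R exp (- \<alpha> * complex_of_real (x / q)) \<partial>lborel)"
    by (rule integral_density) (auto simp: exponential_density_def)
  also have "\<dots> = (\<integral>x. indicator {0<..} x *\<^sub>R exp (- \<beta> * complex_of_real x) \<partial>lborel)"
  proof (rule integral_cong_AE)
    show "AE x in lborel. exponential_density 1 x *\<^sub>R exp (- \<alpha> * complex_of_real (x / q)) =
        indicator {0<..} x *\<^sub>R exp (- \<beta> * complex_of_real x)"
      using AE_lborel_singleton[of 0]
    proof eventually_elim
      case (elim x)
      show ?case
      proof (cases "0 < x")
        case True
        have "exponential_density 1 x *\<^sub>R exp (- \<alpha> * complex_of_real (x / q)) =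
            exp (complex_of_real (- x)) * exp (- \<alpha> * complex_of_real (x / q))"
          using True by (simp add: exponential_density_def scaleR_conv_of_real exp_of_real[symmetric])
        also have "\<dots> = exp (complex_of_real (- x) + - \<alpha> * complex_of_real (x / q))"
          by (simp only: exp_add)
        also have "complex_of_real (- x) + - \<alpha> * complex_of_real (x / q) = - \<beta> * complex_of_real x"
          unfolding \<beta>_def using q by (simp add: field_simps)
        finally show ?thesis using True by simp
      qed (use elim in \<open>simp add: exponential_density_def\<close>)
    qed
  qed measurable
  also have "\<dots> = (CLBINT x=0..\<infinity>. exp (- \<beta> * complex_of_real x))"
    by (simp add: interval_lebesgue_integral_0_infty set_lebesgue_integral_def)
  also have "\<dots> = 1 / \<beta>" by (rule interval_integral_cexp_neg[OF b])
  also have "\<dots> = of_real q / (of_real q + \<alpha>)"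
    unfolding \<beta>_def using q by (simp add: field_simps)
  finally show ?thesis .
qed

lemma integral_uniform_three_steps:
  fixes c1 c2 Q :: real and a1 a2 a3 :: complex
  assumes c: "0 \<le> c1" "0 \<le> c2" "c1 + c2 \<le> Q" "0 < Q"
  shows "(\<integral>u. (if u * Q < c1 then a1 else if u * Q < c1 + c2 then a2 else a3) \<partial>Unif01)
     = (of_real c1 * a1 + of_real c2 * a2 + of_real (Q - c1 - c2) * a3) / of_real Q"
proof -
  interpret prob_space Unif01 by (rule prob_space_uniform_measure) auto
  define t1 where "t1 = c1 / Q"
  define t2 where "t2 = (c1 + c2) / Q"
  have t: "0 \<le> t1" "t1 \<le> t2" "t2 \<le> 1" using c unfolding t1_def t2_def by (auto simp: divide_simps)
  have "{0..1} \<inter> {..<t1} = {0..<t1}" "{0..1} \<inter> {t1..<t2} = {t1..<t2}" "{0..1} \<inter> {t2..} = {t2..1}"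
    using t by auto
  then have meas: "measure Unif01 {..<t1} = t1" "measure Unif01 {t1..<t2} = t2 - t1"
    "measure Unif01 {t2..} = 1 - t2"
    using t by simp_all
  have step: "(\<integral>u. indicator A u *\<^sub>R a \<partial>Unif01) = measure Unif01 A *\<^sub>R a"
    if "A \<in> sets borel" for A and a :: complex
  proof -
    have "integrable Unif01 (indicator A :: real \<Rightarrow> real)"
      using that by (intro integrable_const_bound[where B=1]) (auto simp: indicator_def)
    then show ?thesis by simp
  qed
  have int: "integrable Unif01 (\<lambda>u. indicator A u *\<^sub>R a)" if "A \<in> sets borel" for A and a :: complex
    using that by (intro integrable_const_bound[where B="norm a"]) (auto simp: indicator_def)
  have "(if u * Q < c1 then a1 else if u * Q < c1 + c2 then a2 else a3) =
     indicator {..<t1} u *\<^sub>R a1 + indicator {t1..<t2} u *\<^sub>R a2 + indicator {t2..} u *\<^sub>R a3" for u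
    using c t unfolding t1_def t2_def by (auto simp: indicator_def field_simps)
  then have "(\<integral>u. (if u * Q < c1 then a1 else if u * Q < c1 + c2 then a2 else a3) \<partial>Unif01) =
      t1 *\<^sub>R a1 + (t2 - t1) *\<^sub>R a2 + (1 - t2) *\<^sub>R a3"
    using int by (simp add: step meas)
  also have "\<dots> = (of_real c1 * a1 + of_real c2 * a2 + of_real (Q - c1 - c2) * a3) / of_real Q"
    using c unfolding t1_def t2_def by (simp add: scaleR_conv_of_real field_simps)
  finally show ?thesis .
qed

lemma prob_space_Exp1: "prob_space Exp1"
  by (rule prob_space_exponential_density) simp

lemma prob_space_Unif01: "prob_space Unif01"
  by (rule prob_space_uniform_measure) auto

lemma prob_space_step_space: "prob_space step_space"
  by (rule prob_space_pair[OF prob_space_Exp1 prob_space_Unif01])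

lemma sets_step_space: "sets step_space = sets (borel \<Otimes>\<^sub>M borel)"
  by (intro sets_pair_measure_cong) auto

interpretation seq: sequence_space step_space
  unfolding sequence_space_def by (rule product_prob_spaceI) (rule prob_space_step_space)

interpretation step: pair_sigma_finite Exp1 Unif01
proof -
  interpret Exp1: prob_space Exp1 by (rule prob_space_Exp1)
  interpret Unif01: prob_space Unif01 by (rule prob_space_Unif01)
  show "pair_sigma_finite Exp1 Unif01" by unfold_locales
qed

lemma ctmc_space_eq: "ctmc_space = seq.S"
  unfolding ctmc_space_def ..

interpretation ctmc: prob_space ctmc_space
  unfolding ctmc_space_eq by (rule seq.P.prob_space_axioms)

interpretation step_seq: pair_sigma_finite step_space seq.S
proof -
  interpret seq.S: prob_space seq.S by (rule seq.P.prob_space_axioms)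
  show "pair_sigma_finite step_space seq.S" by unfold_locales
qed

interpretation step_seq: prob_space "step_space \<Otimes>\<^sub>M seq.S"
  by (rule prob_space_pair[OF prob_space_step_space seq.P.prob_space_axioms])

lemma AE_step_space_nonneg: "AE s in step_space. 0 \<le> fst s"
proof (rule step.AE_pair_measure)
  have "Measurable.pred (borel \<Otimes>\<^sub>M borel) (\<lambda>s::real \<times> real. 0 \<le> fst s)" by measurable
  then show "{s \<in> space step_space. 0 \<le> fst s} \<in> sets step_space"
    unfolding sets_step_space by (simp add: pred_def space_pair_measure)
  have "AE x in Exp1. 0 \<le> x"
    by (subst AE_density) (auto simp: exponential_density_def)
  then show "AE x in Exp1. AE y in Unif01. 0 \<le> fst (x, y)"
    by eventually_elim simp
qed

lemma AE_ctmc_space_nonneg: "AE \<omega> in ctmc_space. \<forall>k. 0 \<le> fst (\<omega> k)"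
  unfolding AE_all_countable ctmc_space_eq
  by (intro allI AE_PiM_component[where P="\<lambda>s. 0 \<le> fst s"] prob_space_step_space AE_step_space_nonneg)
     auto

lemma measurable_component [measurable]:
  "(\<lambda>\<omega>. \<omega> k) \<in> measurable ctmc_space (borel \<Otimes>\<^sub>M borel)"
proof -
  have "(\<lambda>\<omega>. \<omega> k) \<in> measurable ctmc_space step_space" unfolding ctmc_space_def by measurable
  then show ?thesis by (simp add: measurable_cong_sets[OF refl sets_step_space])
qed

lemma measurable_jump: "jump l1 l2 m1 m2 z \<in> measurable borel (count_space UNIV)"
  unfolding jump_def Let_def by (cases z) simp

lemma measurable_jchain [measurable]:
  "(\<lambda>\<omega>. jchain l1 l2 m1 m2 z \<omega> k) \<in> measurable ctmc_space (count_space UNIV)"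
proof (induction k)
  case (Suc k)
  have "(\<lambda>\<omega>. snd (\<omega> k)) \<in> borel_measurable ctmc_space" by measurable
  from measurable_compose[OF this measurable_jump]
  show ?case
    by (simp, intro measurable_compose_countable[where f="\<lambda>w \<omega>. jump l1 l2 m1 m2 w (snd (\<omega> k))", OF _ Suc])
       simp
qed simp

lemma measurable_jump_into [measurable]:
  "(\<lambda>\<omega>. jump_into l1 l2 m1 m2 z A \<omega> n) \<in> measurable ctmc_space (count_space UNIV)"
proof -
  have "(\<lambda>\<omega>. (jchain l1 l2 m1 m2 z \<omega> (n - 1), jchain l1 l2 m1 m2 z \<omega> n))
      \<in> measurable ctmc_space (count_space UNIV)"
    by (rule measurable_compose_countable[where f="\<lambda>a \<omega>. (a, jchain l1 l2 m1 m2 z \<omega> n)", OF _ measurable_jchain])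
       (rule measurable_compose_countable[where f="\<lambda>b \<omega>. (a, b)" for a, OF _ measurable_jchain], simp)
  from measurable_compose[OF this, of "\<lambda>(a, b). 1 \<le> n \<and> b \<in> A \<and> a \<noteq> b" "count_space UNIV"]
  show ?thesis unfolding jump_into_def by simp
qed

lemma measurable_jtime [measurable]: "(\<lambda>\<omega>. jtime l1 l2 m1 m2 z \<omega> n) \<in> borel_measurable ctmc_space"
proof -
  have "(\<lambda>\<omega>. qout l1 l2 m1 m2 (jchain l1 l2 m1 m2 z \<omega> k)) \<in> borel_measurable ctmc_space" for k
    using measurable_compose[OF measurable_jchain, of "qout l1 l2 m1 m2" borel] by simp
  then show ?thesis unfolding jtime_def by measurable
qed

definition discounted_hit ::
    "real \<Rightarrow> real \<Rightarrow> real \<Rightarrow> real \<Rightarrow> state \<Rightarrow> state set \<Rightarrow> complex \<Rightarrow> (nat \<Rightarrow> real \<times> real) \<Rightarrow> complex" where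
  "discounted_hit l1 l2 m1 m2 z A \<alpha> \<omega> =
     (if \<exists>n. jump_into l1 l2 m1 m2 z A \<omega> n
      then exp (- \<alpha> * complex_of_real (jtime l1 l2 m1 m2 z \<omega> (LEAST n. jump_into l1 l2 m1 m2 z A \<omega> n)))
      else 0)"

lemma hit_lst_eq_integral:
  "hit_lst l1 l2 m1 m2 z A \<alpha> = (\<integral>\<omega>. discounted_hit l1 l2 m1 m2 z A \<alpha> \<omega> \<partial>ctmc_space)"
  unfolding hit_lst_def discounted_hit_def ..

lemma measurable_discounted_hit [measurable]:
  "discounted_hit l1 l2 m1 m2 z A \<alpha> \<in> borel_measurable ctmc_space"
proof -
  have "(\<lambda>\<omega>. LEAST n. jump_into l1 l2 m1 m2 z A \<omega> n) \<in> measurable ctmc_space (count_space UNIV)"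
    by measurable
  from measurable_compose_countable[where f="\<lambda>n \<omega>. jtime l1 l2 m1 m2 z \<omega> n", OF measurable_jtime this]
  show ?thesis unfolding discounted_hit_def[abs_def] by measurable
qed

lemma jtime_nonneg:
  assumes "0 \<le> l1" "0 \<le> l2" "0 \<le> m1" "0 \<le> m2" "\<forall>k. 0 \<le> fst (\<omega> k)"
  shows "0 \<le> jtime l1 l2 m1 m2 z \<omega> n"
proof -
  have "0 \<le> qout l1 l2 m1 m2 z" for z
    using assms unfolding qout_def by (cases z) auto
  then show ?thesis unfolding jtime_def using assms by (intro sum_nonneg divide_nonneg_nonneg) auto
qed

lemma norm_discounted_hit_le_1:
  assumes "0 \<le> l1" "0 \<le> l2" "0 \<le> m1" "0 \<le> m2" "\<forall>k. 0 \<le> fst (\<omega> k)" and "0 \<le> Re \<alpha>"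
  shows "norm (discounted_hit l1 l2 m1 m2 z A \<alpha> \<omega>) \<le> 1"
  using jtime_nonneg[OF assms(1-5)] assms(6) by (simp add: discounted_hit_def mult_nonneg_nonneg)

lemma norm_hit_lst_le_1:
  assumes "0 \<le> l1" "0 \<le> l2" "0 \<le> m1" "0 \<le> m2" "0 \<le> Re \<alpha>"
  shows "norm (hit_lst l1 l2 m1 m2 z A \<alpha>) \<le> 1"
proof -
  have "norm (hit_lst l1 l2 m1 m2 z A \<alpha>) \<le> (\<integral>\<omega>. norm (discounted_hit l1 l2 m1 m2 z A \<alpha> \<omega>) \<partial>ctmc_space)"
    unfolding hit_lst_eq_integral by (rule integral_norm_bound)
  also have "\<dots> \<le> (\<integral>\<omega>. 1 \<partial>ctmc_space)"
    using AE_ctmc_space_nonneg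
    by (intro integral_mono_AE') (auto elim!: eventually_mono intro: norm_discounted_hit_le_1[OF assms(1-4) _ assms(5)])
  finally show ?thesis by (simp add: ctmc.prob_space)
qed

lemma jchain_case_nat:
  "jchain l1 l2 m1 m2 z (case_nat s \<omega>) (Suc k) = jchain l1 l2 m1 m2 (jump l1 l2 m1 m2 z (snd s)) \<omega> k"
  by (induction k) auto

lemma jtime_case_nat:
  "jtime l1 l2 m1 m2 z (case_nat s \<omega>) (Suc n) =
     fst s / qout l1 l2 m1 m2 z + jtime l1 l2 m1 m2 (jump l1 l2 m1 m2 z (snd s)) \<omega> n"
  unfolding jtime_def by (subst sum.lessThan_Suc_shift) (simp add: jchain_case_nat del: jchain.simps(2))

lemma jump_into_case_nat:
  assumes "jump l1 l2 m1 m2 z (snd s) \<notin> A"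
  shows "jump_into l1 l2 m1 m2 z A (case_nat s \<omega>) n \<longleftrightarrow>
    (\<exists>m. n = Suc m \<and> jump_into l1 l2 m1 m2 (jump l1 l2 m1 m2 z (snd s)) A \<omega> m)"
proof (cases n)
  case (Suc m)
  then show ?thesis
  proof (cases m)
    case 0
    then show ?thesis using Suc assms by (simp add: jump_into_def)
  qed (simp add: jump_into_def jchain_case_nat del: jchain.simps)
qed (simp add: jump_into_def)

lemma discounted_hit_case_nat:
  assumes "z \<notin> A"
  shows "discounted_hit l1 l2 m1 m2 z A \<alpha> (case_nat s \<omega>) =
    exp (- \<alpha> * complex_of_real (fst s / qout l1 l2 m1 m2 z)) *
    (if jump l1 l2 m1 m2 z (snd s) \<in> A then 1 else discounted_hit l1 l2 m1 m2 (jump l1 l2 m1 m2 z (snd s)) A \<alpha> \<omega>)"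
proof -
  let ?z = "jump l1 l2 m1 m2 z (snd s)"
  let ?J = "jump_into l1 l2 m1 m2 z A (case_nat s \<omega>)"
  let ?J' = "jump_into l1 l2 m1 m2 ?z A \<omega>"
  have exp_add: "exp (- \<alpha> * complex_of_real (x + y)) = exp (- \<alpha> * complex_of_real x) * exp (- \<alpha> * complex_of_real y)"
    for x y by (simp only: of_real_add distrib_left exp_add)
  consider "?z \<in> A" | "?z \<notin> A" "\<exists>n. ?J' n" | "?z \<notin> A" "\<not> (\<exists>n. ?J' n)" by blast
  then show ?thesis
  proof cases
    case 1
    then have "?J 1" using assms by (auto simp: jump_into_def)
    moreover have "(LEAST n. ?J n) = 1"
      by (rule Least_equality) (use \<open>?J 1\<close> in \<open>auto simp: jump_into_def\<close>)
    ultimately show ?thesis using 1 by (auto simp: discounted_hit_def jtime_def)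
  next
    case 2
    note J = jump_into_case_nat[OF 2(1)]
    have L: "(LEAST n. ?J n) = Suc (LEAST n. ?J' n)"
    proof (rule Least_equality)
      show "?J (Suc (LEAST n. ?J' n))" using J LeastI_ex[OF 2(2)] by blast
      show "Suc (LEAST n. ?J' n) \<le> y" if "?J y" for y
        using that J by (auto intro: Least_le)
    qed
    have "\<exists>n. ?J n" using J 2(2) by blast
    then have "discounted_hit l1 l2 m1 m2 z A \<alpha> (case_nat s \<omega>) =
        exp (- \<alpha> * complex_of_real (fst s / qout l1 l2 m1 m2 z + jtime l1 l2 m1 m2 ?z \<omega> (LEAST n. ?J' n)))"
      unfolding discounted_hit_def L jtime_case_nat by simp
    then show ?thesis
      using 2 unfolding exp_add by (simp add: discounted_hit_def)
  next
    case 3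
    then have "\<not> (\<exists>n. ?J n)" using jump_into_case_nat[OF 3(1)] by blast
    then show ?thesis using 3 by (simp add: discounted_hit_def)
  qed
qed

text \<open>The path space factors as the first step times the (identically distributed) rest of
  the path.\<close>
lemma hit_lst_first_step:
  assumes pos: "0 \<le> l1" "0 \<le> l2" "0 \<le> m1" "0 \<le> m2" "0 \<le> Re \<alpha>" and zA: "z \<notin> A"
  shows "hit_lst l1 l2 m1 m2 z A \<alpha> = (\<integral>s. exp (- \<alpha> * complex_of_real (fst s / qout l1 l2 m1 m2 z)) *
     (if jump l1 l2 m1 m2 z (snd s) \<in> A then 1 else hit_lst l1 l2 m1 m2 (jump l1 l2 m1 m2 z (snd s)) A \<alpha>) \<partial>step_space)"
proof -
  let ?f = "discounted_hit l1 l2 m1 m2 z A \<alpha>"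
  have cm: "(\<lambda>(s, \<omega>). case_nat s \<omega>) \<in> measurable (step_space \<Otimes>\<^sub>M seq.S) seq.S" by measurable
  have fm: "?f \<in> borel_measurable seq.S" using measurable_discounted_hit unfolding ctmc_space_eq .
  have "hit_lst l1 l2 m1 m2 z A \<alpha> = (\<integral>\<omega>. ?f \<omega> \<partial>distr (step_space \<Otimes>\<^sub>M seq.S) seq.S (\<lambda>(s, \<omega>). case_nat s \<omega>))"
    unfolding hit_lst_eq_integral seq.PiM_iter ctmc_space_eq ..
  also have "\<dots> = (\<integral>p. ?f (case_nat (fst p) (snd p)) \<partial>(step_space \<Otimes>\<^sub>M seq.S))"
    by (subst integral_distr[OF cm fm]) (simp add: split_beta')
  also have "\<dots> = (\<integral>s. \<integral>\<omega>. ?f (case_nat s \<omega>) \<partial>seq.S \<partial>step_space)"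
  proof (rule step_seq.integral_fst'[symmetric, where f="\<lambda>p. ?f (case_nat (fst p) (snd p))", simplified])
    have "AE \<omega> in distr (step_space \<Otimes>\<^sub>M seq.S) seq.S (\<lambda>(s, \<omega>). case_nat s \<omega>). \<forall>k. 0 \<le> fst (\<omega> k)"
      unfolding seq.PiM_iter using AE_ctmc_space_nonneg unfolding ctmc_space_eq .
    from AE_distrD[OF cm this]
    have "AE p in step_space \<Otimes>\<^sub>M seq.S. norm (?f (case_nat (fst p) (snd p))) \<le> 1"
      by (auto simp: split_beta' elim!: eventually_mono intro: norm_discounted_hit_le_1[OF pos(1-4) _ pos(5)])
    moreover have "(\<lambda>p. ?f (case_nat (fst p) (snd p))) \<in> borel_measurable (step_space \<Otimes>\<^sub>M seq.S)"
      using measurable_compose[OF cm fm] by (simp add: split_beta')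
    ultimately show "integrable (step_space \<Otimes>\<^sub>M seq.S) (\<lambda>p. ?f (case_nat (fst p) (snd p)))"
      by (intro step_seq.integrable_const_bound[where B=1])
  qed
  also have "\<dots> = (\<integral>s. exp (- \<alpha> * complex_of_real (fst s / qout l1 l2 m1 m2 z)) *
     (if jump l1 l2 m1 m2 z (snd s) \<in> A then 1 else hit_lst l1 l2 m1 m2 (jump l1 l2 m1 m2 z (snd s)) A \<alpha>) \<partial>step_space)"
  proof (rule Bochner_Integration.integral_cong[OF refl])
    fix s
    show "(\<integral>\<omega>. ?f (case_nat s \<omega>) \<partial>seq.S) = exp (- \<alpha> * complex_of_real (fst s / qout l1 l2 m1 m2 z)) *
      (if jump l1 l2 m1 m2 z (snd s) \<in> A then 1 else hit_lst l1 l2 m1 m2 (jump l1 l2 m1 m2 z (snd s)) A \<alpha>)"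
      unfolding discounted_hit_case_nat[OF zA] integral_mult_right_zero
      by (simp add: hit_lst_eq_integral ctmc_space_eq seq.P.prob_space)
  qed
  finally show ?thesis .
qed

lemma integral_step_space_mult:
  fixes f g :: "real \<Rightarrow> complex"
  assumes [measurable]: "f \<in> borel_measurable borel" "g \<in> borel_measurable borel"
    and f: "\<And>x. 0 \<le> x \<Longrightarrow> norm (f x) \<le> 1" and g: "\<And>u. norm (g u) \<le> 1"
  shows "(\<integral>s. f (fst s) * g (snd s) \<partial>step_space) = (\<integral>x. f x \<partial>Exp1) * (\<integral>u. g u \<partial>Unif01)"
proof -
  have "(\<lambda>s. f (fst s) * g (snd s)) \<in> borel_measurable (borel \<Otimes>\<^sub>M borel)" by measurable
  then have "(\<lambda>s. f (fst s) * g (snd s)) \<in> borel_measurable step_space"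
    by (simp add: measurable_cong_sets[OF sets_step_space refl])
  moreover have "AE s in step_space. norm (f (fst s) * g (snd s)) \<le> 1"
    using AE_step_space_nonneg
    by eventually_elim (simp add: norm_mult f g mult_le_one)
  ultimately have "integrable step_space (\<lambda>s. f (fst s) * g (snd s))"
    by (intro seq.M.integrable_const_bound[where B=1])
  then show ?thesis using step.integral_fst'[of "\<lambda>s. f (fst s) * g (snd s)"] by simp
qed

locale two_class_queue =
  fixes l1 l2 m1 m2 :: real
  assumes l1_pos: "0 < l1" and l2_pos: "0 < l2" and m1_pos: "0 < m1" and m2_pos: "0 < m2"
begin

lemma rates_nonneg: "0 \<le> l1" "0 \<le> l2" "0 \<le> m1" "0 \<le> m2"
  using l1_pos l2_pos m1_pos m2_pos by simp_all

lemma qout_eq: "j = 0 \<longrightarrow> 1 \<le> a \<Longrightarrow> qout l1 l2 m1 m2 (a, j) = l1 + l2 + (if j = 0 then m1 else m2)"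
  unfolding qout_def by auto

lemma integral_jump:
  fixes H :: "state \<Rightarrow> complex"
  assumes aj: "j = 0 \<longrightarrow> 1 \<le> a"
  defines "m \<equiv> if j = 0 then m1 else m2"
  defines "down \<equiv> if j = 0 then (a - 1, 0) else (a, j - 1)"
  shows "(\<integral>u. H (jump l1 l2 m1 m2 (a, j) u) \<partial>Unif01) =
    (of_real l1 * H (a + 1, j) + of_real l2 * H (a, j + 1) + of_real m * H down) / of_real (l1 + l2 + m)"
proof -
  have q: "qout l1 l2 m1 m2 (a, j) = l1 + l2 + m" using qout_eq[OF aj] by (simp add: m_def)
  have "H (jump l1 l2 m1 m2 (a, j) u) = (if u * (l1 + l2 + m) < l1 then H (a + 1, j)
     else if u * (l1 + l2 + m) < l1 + l2 then H (a, j + 1) else H down)" for u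
    unfolding jump_def rate_def Let_def q down_def by auto
  then have "(\<integral>u. H (jump l1 l2 m1 m2 (a, j) u) \<partial>Unif01) =
      (\<integral>u. (if u * (l1 + l2 + m) < l1 then H (a + 1, j) else if u * (l1 + l2 + m) < l1 + l2
            then H (a, j + 1) else H down) \<partial>Unif01)"
    by simp
  also have "\<dots> = (of_real l1 * H (a + 1, j) + of_real l2 * H (a, j + 1) + of_real m * H down) /
      of_real (l1 + l2 + m)"
    using l1_pos l2_pos m1_pos m2_pos
    by (subst integral_uniform_three_steps) (auto simp: m_def)
  finally show ?thesis .
qed

lemma hit_lst_balance:
  assumes \<alpha>: "0 \<le> Re \<alpha>" and zA: "(a, j) \<notin> A" and aj: "j = 0 \<longrightarrow> 1 \<le> a"
  defines "H \<equiv> \<lambda>w. if w \<in> A then 1 else hit_lst l1 l2 m1 m2 w A \<alpha>"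
  defines "m \<equiv> if j = 0 then m1 else m2"
  defines "down \<equiv> if j = 0 then (a - 1, 0) else (a, j - 1)"
  shows "(of_real (l1 + l2 + m) + \<alpha>) * hit_lst l1 l2 m1 m2 (a, j) A \<alpha> =
     of_real l1 * H (a + 1, j) + of_real l2 * H (a, j + 1) + of_real m * H down"
proof -
  define q where "q = l1 + l2 + m"
  have q: "qout l1 l2 m1 m2 (a, j) = q" and q_pos: "0 < q"
    using qout_eq[OF aj] l1_pos l2_pos m1_pos m2_pos by (simp_all add: q_def m_def)
  have "0 < Re (of_real q + \<alpha>)" using q_pos \<alpha> by simp
  then have nz: "of_real q + \<alpha> \<noteq> 0" by (metis zero_complex.sel(1) less_irrefl)
  have "hit_lst l1 l2 m1 m2 (a, j) A \<alpha> =
      (\<integral>s. exp (- \<alpha> * complex_of_real (fst s / q)) * H (jump l1 l2 m1 m2 (a, j) (snd s)) \<partial>step_space)"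
    using hit_lst_first_step[OF rates_nonneg \<alpha> zA] by (simp add: q H_def)
  also have "\<dots> = (\<integral>x. exp (- \<alpha> * complex_of_real (x / q)) \<partial>Exp1) * (\<integral>u. H (jump l1 l2 m1 m2 (a, j) u) \<partial>Unif01)"
  proof (rule integral_step_space_mult)
    show "(\<lambda>u. H (jump l1 l2 m1 m2 (a, j) u)) \<in> borel_measurable borel"
      using measurable_compose[OF measurable_jump, of H] by simp
    show "norm (exp (- \<alpha> * complex_of_real (x / q))) \<le> 1" if "0 \<le> x" for x
      using that q_pos \<alpha> by (simp add: mult_nonneg_nonneg)
    show "norm (H (jump l1 l2 m1 m2 (a, j) u)) \<le> 1" for u
      using norm_hit_lst_le_1[OF rates_nonneg \<alpha>] by (simp add: H_def)
  qed simp
  also have "\<dots> = of_real q / (of_real q + \<alpha>) *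
      ((of_real l1 * H (a + 1, j) + of_real l2 * H (a, j + 1) + of_real m * H down) / of_real q)"
    unfolding exponential_laplace_transform[OF q_pos \<alpha>] integral_jump[OF aj]
    by (simp add: m_def down_def q_def)
  also have "\<dots> = (of_real l1 * H (a + 1, j) + of_real l2 * H (a, j + 1) + of_real m * H down) /
      (of_real q + \<alpha>)"
    using q_pos by simp
  finally show ?thesis
    unfolding q_def[symmetric] using nz by (simp add: field_simps)
qed

text \<open>The value 1 at k = 0 is a boundary value; the first-step equations only use it at (i, 0).\<close>
definition hit_above :: "nat \<Rightarrow> complex \<Rightarrow> nat \<Rightarrow> nat \<Rightarrow> complex" where
  "hit_above i \<alpha> k j = (if k = 0 then 1 else hit_lst l1 l2 m1 m2 (i + k, j) {(i, 0)} \<alpha>)"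

lemma norm_hit_above_le_1: "0 \<le> Re \<alpha> \<Longrightarrow> norm (hit_above i \<alpha> k j) \<le> 1"
  unfolding hit_above_def using norm_hit_lst_le_1[OF rates_nonneg] by simp

lemma hit_above_balance:
  assumes \<alpha>: "0 \<le> Re \<alpha>" and k: "1 \<le> k"
  shows "(of_real (l1 + l2 + (if j = 0 then m1 else m2)) + \<alpha>) * hit_above i \<alpha> k j =
    of_real l1 * hit_above i \<alpha> (k + 1) j + of_real l2 * hit_above i \<alpha> k (j + 1) +
    of_real (if j = 0 then m1 else m2) * (if j = 0 then hit_above i \<alpha> (k - 1) 0 else hit_above i \<alpha> k (j - 1))"
proof -
  have "(i + k, j) \<notin> {(i, 0)}" "j = 0 \<longrightarrow> 1 \<le> i + k" using k by auto
  from hit_lst_balance[OF \<alpha> this] show ?thesis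
    using k by (cases "j = 0") (auto simp: hit_above_def add.assoc Suc_le_eq)
qed

text \<open>Both sides solve the same contracting system with the same value at (i, 0).\<close>
lemma hit_above_Suc:
  assumes \<alpha>: "0 < Re \<alpha>" and k: "1 \<le> k"
  shows "hit_above i \<alpha> (k + 1) j = hit_above i \<alpha> 1 0 * hit_above i \<alpha> k j"
proof -
  define G where "G = hit_above i \<alpha> 1 0"
  define d where "d k j = hit_above i \<alpha> (k + 1) j - G * hit_above i \<alpha> k j" for k j
  have "d k j = 0"
  proof (rule bounded_discounted_harmonic_eq_0[OF l1_pos l2_pos m1_pos m2_pos \<alpha> _ _ _ k])
    show "norm (d k j) \<le> 2" for k j
      using norm_hit_above_le_1[of \<alpha> i] \<alpha> norm_triangle_ineq4 unfolding d_def G_def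
      by (smt (verit, best) mult_le_one norm_ge_zero norm_mult)
    show "d 0 0 = 0" by (simp add: d_def G_def hit_above_def)
    fix k j :: nat assume k: "1 \<le> k"
    define c where "c = of_real (l1 + l2 + (if j = 0 then m1 else m2)) + \<alpha>"
    have "c * d k j = c * hit_above i \<alpha> (k + 1) j - G * (c * hit_above i \<alpha> k j)"
      by (simp add: d_def algebra_simps)
    also have "\<dots> = of_real l1 * d (k + 1) j + of_real l2 * d k (j + 1) +
        of_real (if j = 0 then m1 else m2) * (if j = 0 then d (k - 1) 0 else d k (j - 1))"
      unfolding c_def hit_above_balance[OF less_imp_le[OF \<alpha>] k]
        hit_above_balance[OF less_imp_le[OF \<alpha>] le_add2[of 1 k]]
      using k by (cases "j = 0") (simp_all add: d_def algebra_simps numeral_2_eq_2)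
    finally show "(of_real (l1 + l2 + (if j = 0 then m1 else m2)) + \<alpha>) * d k j =
        of_real l1 * d (k + 1) j + of_real l2 * d k (j + 1) +
        of_real (if j = 0 then m1 else m2) * (if j = 0 then d (k - 1) 0 else d k (j - 1))"
      unfolding c_def .
  qed
  then show ?thesis by (simp add: d_def G_def)
qed

text \<open>By hit_above_Suc a class-1 arrival on level 1 only contributes a factor G, so along j the
  transform solves the recurrence of the M/M/1 busy period with rates l2, m2, killed at rate
  s = l1 (1 - G) + \<alpha>.\<close>
lemma hit_above_level_one:
  fixes i :: nat and \<alpha> :: complex
  assumes \<alpha>: "0 < Re \<alpha>"
  defines "G \<equiv> hit_above i \<alpha> 1 0"
  shows "hit_above i \<alpha> 1 1 = G * phi l2 m2 (of_real l1 * (1 - G) + \<alpha>)"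
proof -
  define s where "s = of_real l1 * (1 - G) + \<alpha>"
  define r where "r = (of_real l2 + of_real m2 + s +
      csqrt ((of_real l2 + of_real m2 + s)\<^sup>2 - 4 * of_real l2 * of_real m2)) / (2 * of_real l2)"
  have "Re G \<le> 1"
    using norm_hit_above_le_1[of \<alpha> i 1 0] \<alpha> complex_Re_le_cmod[of G] by (simp add: G_def)
  then have "0 \<le> l1 * (1 - Re G)" using l1_pos by simp
  then have "0 < Re s" using \<alpha> by (simp add: s_def)
  note roots = busy_period_roots[OF l2_pos m2_pos this, folded r_def]
  have "hit_above i \<alpha> 1 1 = phi l2 m2 s * hit_above i \<alpha> 1 0"
  proof (rule bounded_recurrence_ratio)
    fix j
    have "(of_real (l1 + l2 + m2) + \<alpha>) * hit_above i \<alpha> 1 (j + 1) =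
        of_real l1 * (G * hit_above i \<alpha> 1 (j + 1)) + of_real l2 * hit_above i \<alpha> 1 (j + 2) +
        of_real m2 * hit_above i \<alpha> 1 j"
      using hit_above_balance[where k=1 and i=i and j="j + 1", OF less_imp_le[OF \<alpha>]]
        hit_above_Suc[where k=1 and i=i and j="j + 1", OF \<alpha>]
      by (simp add: G_def numeral_2_eq_2)
    then show "hit_above i \<alpha> 1 (j + 2) = (phi l2 m2 s + r) * hit_above i \<alpha> 1 (j + 1) -
        phi l2 m2 s * r * hit_above i \<alpha> 1 j"
      using l2_pos unfolding roots(1,2) by (simp add: s_def field_simps)
    show "norm (hit_above i \<alpha> 1 j) \<le> 1" using \<alpha> by (simp add: norm_hit_above_le_1)
  qed (use roots in simp_all)
  then show ?thesis by (simp add: G_def s_def mult.commute)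
qed

end

theorem proposition7:
  fixes l1 l2 m1 m2 :: real and \<alpha> :: complex and i :: nat
  assumes "l1 > 0" "l2 > 0" "m1 > 0" "m2 > 0" "Re \<alpha> > 0"
  defines "G \<equiv> Gfun l1 l2 m1 m2 i \<alpha>"
  shows "(of_real (l1 + l2) + of_real m1 + \<alpha>) * G =
           of_real m1 + of_real l1 * G\<^sup>2
           + of_real l2 * G * phi l2 m2 (of_real l1 * (1 - G) + \<alpha>)"
proof -
  interpret two_class_queue l1 l2 m1 m2 by unfold_locales (use assms in auto)
  have G: "G = hit_above i \<alpha> 1 0" by (simp add: G_def Gfun_def hit_above_def)
  have "(of_real (l1 + l2 + m1) + \<alpha>) * G =
      of_real l1 * hit_above i \<alpha> 2 0 + of_real l2 * hit_above i \<alpha> 1 1 + of_real m1"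
    using hit_above_balance[where \<alpha>=\<alpha> and k=1 and i=i and j=0] assms(5)
    by (simp add: G hit_above_def numeral_2_eq_2)
  moreover have "hit_above i \<alpha> 2 0 = G\<^sup>2"
    using hit_above_Suc[where k=1 and i=i and j=0, OF assms(5)] by (simp add: G power2_eq_square numeral_2_eq_2)
  moreover have "hit_above i \<alpha> 1 1 = G * phi l2 m2 (of_real l1 * (1 - G) + \<alpha>)"
    unfolding G by (rule hit_above_level_one[OF assms(5)])
  ultimately show ?thesis by (simp add: algebra_simps)
qed

end
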